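(* Let $A$ be a set and $W$ a set of subsets of $A$ which contains $\emptyset$ and $A$ and is closed under pairwise unions and intersections. Suppose that no $C\subseteq A\times A$ all of whose rows $\{b\mid (a,b)\in C\}$ and columns $\{b\mid (b,a)\in C\}$ $(a\in A)$ belong to $W$ has infinitely many distinct rows (equivalently, infinitely many distinct columns). Then $(A,W)$ is a Pratt comonoid.
   Context: A Pratt comonoid is a pair $(A,W)$ where $A$ is a set and $W$ is a set of subsets of $A$ such that (i) $\emptyset\in W$ and $A\in W$; (ii) whenever $C\subseteq A\times A$ is such that for every $a\in A$ both the $a$-th row $\{b\mid (a,b)\in C\}$ and the $a$-th column $\{b\mid (b,a)\in C\}$ belong to $W$, the diagonal $\{b\mid (b,b)\in C\}$ also belongs to $W$. *)

theory Defs
  imports Main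
begin

definition row :: "('a \<times> 'a) set \<Rightarrow> 'a \<Rightarrow> 'a set" where
  "row C a = {b. (a, b) \<in> C}"

definition col :: "('a \<times> 'a) set \<Rightarrow> 'a \<Rightarrow> 'a set" where
  "col C a = {b. (b, a) \<in> C}"

definition diag :: "('a \<times> 'a) set \<Rightarrow> 'a set" where
  "diag C = {b. (b, b) \<in> C}"

definition W_matrix :: "'a set \<Rightarrow> 'a set set \<Rightarrow> ('a \<times> 'a) set \<Rightarrow> bool" where
  "W_matrix A W C \<longleftrightarrow> C \<subseteq> A \<times> A \<and> (\<forall>a\<in>A. row C a \<in> W \<and> col C a \<in> W)"

definition pratt_comonoid :: "'a set \<Rightarrow> 'a set set \<Rightarrow> bool" where
  "pratt_comonoid A W \<longleftrightarrow>
     W \<subseteq> Pow A \<and> {} \<in> W \<and> A \<in> W \<and>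
     (\<forall>C. W_matrix A W C \<longrightarrow> diag C \<in> W)"

end

theory Submission
  imports Defs
begin

text \<open>A point b lies on the diagonal iff b lies in some row R such that b lies in the column of
  every c \<in> R (take R = row C b). Hence the diagonal is a union, over the finitely many rows R,
  of the intersections of R with the finitely many columns indexed by R, and closure of W under
  binary unions and intersections finishes the argument.\<close>

lemma Inter_in_if_finite_Int_closed:
  assumes "finite F" "F \<noteq> {}" "F \<subseteq> W"
    and "\<And>X Y. X \<in> W \<Longrightarrow> Y \<in> W \<Longrightarrow> X \<inter> Y \<in> W"
  shows "\<Inter>F \<in> W"
  using assms(1-3) by (induction F rule: finite_ne_induct) (auto intro: assms(4))

lemma Union_in_if_finite_Un_closed:
  assumes "finite F" "F \<subseteq> W" "{} \<in> W"
    and "\<And>X Y. X \<in> W \<Longrightarrow> Y \<in> W \<Longrightarrow> X \<union> Y \<in> W"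
  shows "\<Union>F \<in> W"
  using assms(1,2) by (induction F rule: finite_induct) (auto intro: assms(3,4))

lemma row_converse: "row (C\<inverse>) = col C"
  unfolding row_def col_def by auto

lemma W_matrix_converse: "W_matrix A W C \<Longrightarrow> W_matrix A W (C\<inverse>)"
  unfolding W_matrix_def row_def col_def by auto

lemma diag_eq_Union_rows:
  assumes "C \<subseteq> A \<times> A"
  shows "diag C = (\<Union>R \<in> row C ` A. \<Inter>(insert R (col C ` R)))"
proof
  show "diag C \<subseteq> (\<Union>R \<in> row C ` A. \<Inter>(insert R (col C ` R)))"
  proof
    fix b assume "b \<in> diag C"
    then have "b \<in> A" "b \<in> \<Inter>(insert (row C b) (col C ` row C b))"
      using assms unfolding diag_def row_def col_def by auto
    then show "b \<in> (\<Union>R \<in> row C ` A. \<Inter>(insert R (col C ` R)))" by blast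
  qed
  show "(\<Union>R \<in> row C ` A. \<Inter>(insert R (col C ` R))) \<subseteq> diag C"
    unfolding diag_def row_def col_def by blast
qed

theorem corollary5p4:
  fixes A :: "'a set" and W :: "'a set set"
  assumes "W \<subseteq> Pow A"
    and "{} \<in> W" and "A \<in> W"
    and "\<And>X Y. X \<in> W \<Longrightarrow> Y \<in> W \<Longrightarrow> X \<union> Y \<in> W"
    and "\<And>X Y. X \<in> W \<Longrightarrow> Y \<in> W \<Longrightarrow> X \<inter> Y \<in> W"
    and "\<And>C. W_matrix A W C \<Longrightarrow> finite (row C ` A)"
  shows "pratt_comonoid A W"
  unfolding pratt_comonoid_def
proof (intro conjI allI impI)
  fix C assume C: "W_matrix A W C"
  then have C_sub: "C \<subseteq> A \<times> A" and rows_cols: "\<And>a. a \<in> A \<Longrightarrow> row C a \<in> W \<and> col C a \<in> W"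
    unfolding W_matrix_def by auto
  have finite_cols: "finite (col C ` A)"
    using assms(6)[OF W_matrix_converse[OF C]] by (simp add: row_converse)
  have "\<Inter>(insert R (col C ` R)) \<in> W" if "R \<in> row C ` A" for R
  proof (rule Inter_in_if_finite_Int_closed[OF _ _ _ assms(5)])
    have "R \<subseteq> A" using that C_sub unfolding row_def by auto
    then show "finite (insert R (col C ` R))"
      using finite_cols by (auto intro: finite_subset)
    show "insert R (col C ` R) \<subseteq> W" using that \<open>R \<subseteq> A\<close> rows_cols by auto
  qed simp
  then show "diag C \<in> W"
    unfolding diag_eq_Union_rows[OF C_sub]
    by (intro Union_in_if_finite_Un_closed[OF _ _ assms(2,4)]) (auto simp: assms(6)[OF C])
qed (use assms in auto)

end
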